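(* Let $c>0$, $m>0$, $q\in\mathbb{R}\setminus\{0\}$, $E=(E_1,\dots,E_n)$ with $E_j\in C^1(\mathbb{R})$ and $\sup_t\sum_j|E_j^{(k)}(t)|<E_{0,k}<\infty$ for $k\in\{0,1\}$, and $b(t)=\int_0^tqE(s)\,ds$; assume condition (E1). Let $Q(t,\xi)=(c^2(\xi+b(t))^2+(mc^2)^2)^{1/2}$, let $B,D$ be the solutions of $$B(t,\xi)=\int_0^t\big(Q-Q^{-1}Q'\sin B\cos B\big)ds,\qquad D(t,\xi)=\int_0^t\big(Q+Q^{-1}Q'\sin D\cos D\big)ds,$$ and define $$A(t,\xi)=e^{-\int_0^tQ(s,\xi)^{-1}Q'(s,\xi)\sin^2B(s,\xi)\,ds},\qquad C(t,\xi)=Q(0,\xi)^{-1}e^{-\int_0^tQ(s,\xi)^{-1}Q'(s,\xi)\cos^2D(s,\xi)\,ds}.$$ Then there exist constants $0<C_0,C_1<\infty$, independent of $t$ and $\xi$, such that $$\frac{Q(0,\xi)^{1/2}}{Q(t,\xi)^{1/2}}e^{-C_0}\le|A(t,\xi)|\le\frac{Q(0,\xi)^{1/2}}{Q(t,\xi)^{1/2}}e^{C_0},\qquad \frac{e^{-C_1}}{Q(t,\xi)^{1/2}Q(0,\xi)^{1/2}}\le|C(t,\xi)|\le\frac{e^{C_1}}{Q(t,\xi)^{1/2}Q(0,\xi)^{1/2}}.$$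
   Context: $Q'=\partial_tQ$. Condition (E1): $\lim_{t\to\infty}|b(t)|=\infty$, and there exist constants $e_0,e_1$ such that for every $a\in\mathbb{R}^n$ and every $t$, $$\int_{\{s:\,|a+b(s)|\le 2E_{0,0}/(mc^2)\}}|b'(s)|\,ds\le e_0,\qquad \int_0^t\frac{|b'(s)|^2+|b''(s)|}{c^2(a+b(s))^2+(mc^2)^2}\,ds\le e_1 .$$ *)

theory Defs
  imports "HOL-Analysis.Analysis"
begin

definition drift :: "real \<Rightarrow> (real \<Rightarrow> real ^ 'n) \<Rightarrow> real \<Rightarrow> real ^ 'n" where
  "drift q E t = (if 0 \<le> t then integral {0..t} (\<lambda>s. q *\<^sub>R E s)
                  else - integral {t..0} (\<lambda>s. q *\<^sub>R E s))"

definition Qf :: "real \<Rightarrow> real \<Rightarrow> (real \<Rightarrow> real ^ 'n) \<Rightarrow> real \<Rightarrow> real ^ 'n \<Rightarrow> real" where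
  "Qf c m b t \<xi> = sqrt (c\<^sup>2 * (norm (\<xi> + b t))\<^sup>2 + (m * c\<^sup>2)\<^sup>2)"

definition Qd :: "real \<Rightarrow> real \<Rightarrow> (real \<Rightarrow> real ^ 'n) \<Rightarrow> real \<Rightarrow> real ^ 'n \<Rightarrow> real" where
  "Qd c m b t \<xi> = deriv (\<lambda>\<tau>. Qf c m b \<tau> \<xi>) t"

end

theory Submission
  imports Defs
begin

text \<open>Write \<open>G = Q'/Q\<close>, the derivative of \<open>log Q\<close>. Since \<open>sin\<^sup>2 B = (1 - cos 2B)/2\<close> and
  \<open>cos\<^sup>2 D = (1 + cos 2D)/2\<close>, the exponents of \<open>A\<close> and \<open>Q(0) C\<close> are \<open>(log Q(t) - log Q(0))/2\<close>
  up to half of an oscillatory integral \<open>\<integral>\<^sub>0\<^sup>t G cos \<theta>\<close> with \<open>\<theta> = 2B\<close> or \<open>\<theta> = 2D\<close>, so it suffices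
  to bound these integrals uniformly in \<open>t\<close> and \<open>\<xi>\<close>. The phase satisfies \<open>\<theta>' = 2Q \<plusminus> G sin \<theta>\<close> with
  \<open>Q \<ge> mc\<^sup>2\<close>, so differentiating \<open>h sin \<theta>\<close> with \<open>h = G/(2Q)\<close> integrates \<open>G cos \<theta>\<close> by parts: what
  remains are boundary terms bounded by \<open>sup |h|\<close> and the integrals of \<open>|h'|\<close> and \<open>G h = G\<^sup>2/(2Q)\<close>,
  which are dominated by \<open>(|b'|\<^sup>2 + |b''|)/Q\<^sup>2\<close>, the integrand of the second condition in (E1).\<close>

lemma has_real_derivative_inner:
  fixes u v :: "real \<Rightarrow> 'a::real_inner"
  assumes "(u has_vector_derivative u') (at s within S)" "(v has_vector_derivative v') (at s within S)"
  shows "((\<lambda>\<tau>. u \<tau> \<bullet> v \<tau>) has_real_derivative u' \<bullet> v s + u s \<bullet> v') (at s within S)"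
proof -
  have "((\<lambda>\<tau>. u \<tau> \<bullet> v \<tau>) has_derivative (\<lambda>h. u s \<bullet> (h *\<^sub>R v') + (h *\<^sub>R u') \<bullet> v s)) (at s within S)"
    using has_derivative_inner[OF assms[unfolded has_vector_derivative_def]] .
  moreover have "(\<lambda>h. u s \<bullet> (h *\<^sub>R v') + (h *\<^sub>R u') \<bullet> v s) = (*) (u' \<bullet> v s + u s \<bullet> v')"
    by (rule ext) (simp add: algebra_simps)
  ultimately show ?thesis by (simp add: has_field_derivative_def)
qed

lemma continuous_on_indefinite_integral_eq:
  fixes f y :: "real \<Rightarrow> 'a::banach"
  assumes "\<And>t. t \<in> {a..b} \<Longrightarrow> (f has_integral y t) {a..t}"
  shows "continuous_on {a..b} y"
proof (cases "a \<le> b")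
  case True
  then have "continuous_on {a..b} (\<lambda>t. integral {a..t} f)"
    using assms by (intro indefinite_integral_continuous_1) auto
  then show ?thesis
    by (rule continuous_on_eq) (use assms in \<open>auto intro!: integral_unique[symmetric]\<close>)
qed simp

lemma has_vector_derivative_indefinite_integral_eq:
  fixes f y :: "real \<Rightarrow> 'a::banach"
  assumes "\<And>t. t \<in> {a..b} \<Longrightarrow> (f has_integral y t) {a..t}"
    and "continuous_on {a..b} f" and "s \<in> {a..b}"
  shows "(y has_vector_derivative f s) (at s within {a..b})"
  using integral_has_vector_derivative[OF assms(2,3)]
  by (rule has_vector_derivative_transform[OF assms(3), rotated]) (use assms(1) in \<open>auto intro!: integral_unique[symmetric]\<close>)

lemma drift_has_vector_derivative:
  fixes E :: "real \<Rightarrow> real ^ 'n"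
  assumes "continuous_on UNIV E"
  shows "(drift q E has_vector_derivative q *\<^sub>R E t) (at t)"
proof -
  define f where "f = (\<lambda>s. q *\<^sub>R E s)"
  have int: "f integrable_on {x..y}" for x y
    unfolding f_def by (intro integrable_continuous_real continuous_intros continuous_on_subset[OF assms]) auto
  define a where "a = min t 0 - 1"
  have eq: "drift q E x = integral {a..x} f - integral {a..0} f" if "a < x" for x
  proof (cases "0 \<le> x")
    case True
    then have "integral {a..0} f + integral {0..x} f = integral {a..x} f"
      using Henstock_Kurzweil_Integration.integral_combine[OF _ _ int, of a 0 x] by (simp add: a_def)
    then show ?thesis using True by (simp add: drift_def f_def algebra_simps)
  next
    case False
    then have "integral {a..x} f + integral {x..0} f = integral {a..0} f"
      using Henstock_Kurzweil_Integration.integral_combine[OF _ _ int, of a x 0] \<open>a < x\<close> by simp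
    then show ?thesis using False by (simp add: drift_def f_def algebra_simps)
  qed
  have t: "t \<in> {a<..<t + 1}" by (simp add: a_def)
  have "((\<lambda>x. integral {a..x} f) has_vector_derivative f t) (at t within {a..t + 1})"
    by (rule integral_has_vector_derivative) (auto simp: a_def f_def intro!: continuous_intros continuous_on_subset[OF assms])
  then have "((\<lambda>x. integral {a..x} f) has_vector_derivative f t) (at t)"
    using at_within_interior[of t "{a..t + 1}"] t by simp
  then have "((\<lambda>x. integral {a..x} f - integral {a..0} f) has_vector_derivative f t) (at t)"
    by (auto intro!: derivative_eq_intros)
  then have "(drift q E has_vector_derivative f t) (at t)"
    by (rule has_vector_derivative_transform_within_open[OF _ _ t]) (auto simp: eq)
  then show ?thesis by (simp add: f_def)
qed

lemma Qf_pos: "c \<noteq> 0 \<Longrightarrow> m \<noteq> 0 \<Longrightarrow> 0 < Qf c m b s \<xi>"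
  by (simp add: Qf_def add_nonneg_pos)

lemma Qf_has_real_derivative:
  fixes b :: "real \<Rightarrow> real ^ 'n"
  assumes "(b has_vector_derivative b') (at s)" "c \<noteq> 0" "m \<noteq> 0"
  shows "((\<lambda>\<tau>. Qf c m b \<tau> \<xi>) has_real_derivative c\<^sup>2 * ((\<xi> + b s) \<bullet> b') / Qf c m b s \<xi>) (at s)"
proof -
  have u: "((\<lambda>\<tau>. \<xi> + b \<tau>) has_vector_derivative b') (at s)"
    using assms(1) by (auto intro!: derivative_eq_intros)
  have "0 < c\<^sup>2 * ((\<xi> + b s) \<bullet> (\<xi> + b s)) + (m * c\<^sup>2)\<^sup>2"
    using assms(2,3) by (simp add: add_nonneg_pos)
  then have "((\<lambda>\<tau>. sqrt (c\<^sup>2 * ((\<xi> + b \<tau>) \<bullet> (\<xi> + b \<tau>)) + (m * c\<^sup>2)\<^sup>2)) has_real_derivative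
      inverse (sqrt (c\<^sup>2 * ((\<xi> + b s) \<bullet> (\<xi> + b s)) + (m * c\<^sup>2)\<^sup>2)) / 2 * (c\<^sup>2 * (b' \<bullet> (\<xi> + b s) + (\<xi> + b s) \<bullet> b'))) (at s)"
    by (auto intro!: derivative_eq_intros has_real_derivative_inner[OF u u])
  then show ?thesis
    by (simp add: Qf_def power2_norm_eq_inner inner_commute field_simps)
qed

section \<open>Oscillatory integrals along a phase\<close>

lemma double_phase_has_real_derivative:
  fixes Q G \<theta> :: "real \<Rightarrow> real"
  assumes sol: "\<And>t. t \<in> {0..T} \<Longrightarrow> ((\<lambda>s. Q s + \<kappa> * G s * sin (\<theta> s) * cos (\<theta> s)) has_integral \<theta> t) {0..t}"
    and "continuous_on {0..T} Q" "continuous_on {0..T} G" "s \<in> {0..T}"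
  shows "((\<lambda>s. 2 * \<theta> s) has_real_derivative 2 * Q s + \<kappa> * G s * sin (2 * \<theta> s)) (at s within {0..T})"
proof -
  have "continuous_on {0..T} \<theta>"
    using sol by (rule continuous_on_indefinite_integral_eq)
  then have "(\<theta> has_vector_derivative Q s + \<kappa> * G s * sin (\<theta> s) * cos (\<theta> s)) (at s within {0..T})"
    using assms by (intro has_vector_derivative_indefinite_integral_eq[OF sol] continuous_intros)
  then have "((\<lambda>s. 2 * \<theta> s) has_real_derivative 2 * (Q s + \<kappa> * G s * sin (\<theta> s) * cos (\<theta> s))) (at s within {0..T})"
    by (intro DERIV_cmult) (simp add: has_real_derivative_iff_has_vector_derivative)
  then show ?thesis
    unfolding sin_double by (simp add: algebra_simps)
qed

lemma integral_cos_phase_by_parts: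
  fixes \<theta> \<omega> g h h' :: "real \<Rightarrow> real"
  assumes "0 \<le> T"
    and \<theta>: "\<And>s. s \<in> {0..T} \<Longrightarrow> (\<theta> has_real_derivative \<omega> s + \<sigma> * g s * sin (\<theta> s)) (at s within {0..T})"
    and h: "\<And>s. s \<in> {0..T} \<Longrightarrow> (h has_real_derivative h' s) (at s within {0..T})"
    and h_\<omega>: "\<And>s. s \<in> {0..T} \<Longrightarrow> h s * \<omega> s = g s"
    and g: "continuous_on {0..T} g" and h': "continuous_on {0..T} h'"
  shows "integral {0..T} (\<lambda>s. g s * cos (\<theta> s)) = h T * sin (\<theta> T) - h 0 * sin (\<theta> 0)
     - integral {0..T} (\<lambda>s. h' s * sin (\<theta> s))
     - \<sigma> * integral {0..T} (\<lambda>s. g s * h s * (sin (\<theta> s) * cos (\<theta> s)))"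
proof -
  from DERIV_continuous_on[OF \<theta>] DERIV_continuous_on[OF h]
  have int: "(\<lambda>s. h' s * sin (\<theta> s)) integrable_on {0..T}"
      "(\<lambda>s. g s * h s * (sin (\<theta> s) * cos (\<theta> s))) integrable_on {0..T}"
    using g h' by (auto intro!: integrable_continuous_real continuous_intros)
  have "((\<lambda>s. h' s * sin (\<theta> s) + g s * cos (\<theta> s) + \<sigma> * (g s * h s * (sin (\<theta> s) * cos (\<theta> s))))
      has_integral h T * sin (\<theta> T) - h 0 * sin (\<theta> 0)) {0..T}"
  proof (rule fundamental_theorem_of_calculus[OF \<open>0 \<le> T\<close>])
    fix s assume s: "s \<in> {0..T}"
    have "((\<lambda>s. h s * sin (\<theta> s)) has_real_derivative
        h' s * sin (\<theta> s) + h s * (cos (\<theta> s) * (\<omega> s + \<sigma> * g s * sin (\<theta> s)))) (at s within {0..T})"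
      by (auto intro!: derivative_eq_intros h[OF s] \<theta>[OF s])
    moreover have "h s * (cos (\<theta> s) * (\<omega> s + \<sigma> * g s * sin (\<theta> s)))
        = g s * cos (\<theta> s) + \<sigma> * (g s * h s * (sin (\<theta> s) * cos (\<theta> s)))"
      by (simp add: algebra_simps flip: h_\<omega>[OF s])
    ultimately show "((\<lambda>s. h s * sin (\<theta> s)) has_vector_derivative
        h' s * sin (\<theta> s) + g s * cos (\<theta> s) + \<sigma> * (g s * h s * (sin (\<theta> s) * cos (\<theta> s)))) (at s within {0..T})"
      by (simp add: has_real_derivative_iff_has_vector_derivative add.assoc)
  qed
  then have "((\<lambda>s. h' s * sin (\<theta> s) + g s * cos (\<theta> s) + \<sigma> * (g s * h s * (sin (\<theta> s) * cos (\<theta> s)))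
        - h' s * sin (\<theta> s) - \<sigma> * (g s * h s * (sin (\<theta> s) * cos (\<theta> s))))
      has_integral h T * sin (\<theta> T) - h 0 * sin (\<theta> 0) - integral {0..T} (\<lambda>s. h' s * sin (\<theta> s))
        - \<sigma> * integral {0..T} (\<lambda>s. g s * h s * (sin (\<theta> s) * cos (\<theta> s)))) {0..T}"
    using int by (intro has_integral_diff has_integral_mult_right integrable_integral)
  then show ?thesis
    by (simp add: integral_unique)
qed

lemma abs_mult_le_of_abs_le_one:
  fixes x y a :: real
  assumes "\<bar>x\<bar> \<le> a" "\<bar>y\<bar> \<le> 1"
  shows "\<bar>x * y\<bar> \<le> a"
  using assms mult_left_le[of "\<bar>y\<bar>" "\<bar>x\<bar>"] by (simp add: abs_mult)

lemma integral_cos_phase_bound: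
  fixes \<theta> \<omega> g h h' \<rho> :: "real \<Rightarrow> real"
  assumes "0 \<le> T" "\<bar>\<sigma>\<bar> \<le> 1"
    and "\<And>s. s \<in> {0..T} \<Longrightarrow> (\<theta> has_real_derivative \<omega> s + \<sigma> * g s * sin (\<theta> s)) (at s within {0..T})"
    and "\<And>s. s \<in> {0..T} \<Longrightarrow> (h has_real_derivative h' s) (at s within {0..T})"
    and "\<And>s. s \<in> {0..T} \<Longrightarrow> h s * \<omega> s = g s"
    and "continuous_on {0..T} g" "continuous_on {0..T} h'"
    and h_le: "\<And>s. s \<in> {0..T} \<Longrightarrow> \<bar>h s\<bar> \<le> H"
    and h'_le: "\<And>s. s \<in> {0..T} \<Longrightarrow> \<bar>h' s\<bar> \<le> \<rho> s"
    and gh_le: "\<And>s. s \<in> {0..T} \<Longrightarrow> \<bar>g s * h s\<bar> \<le> \<rho> s"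
    and "\<rho> integrable_on {0..T}" "integral {0..T} \<rho> \<le> e"
  shows "\<bar>integral {0..T} (\<lambda>s. g s * cos (\<theta> s))\<bar> \<le> 2 * H + 2 * e"
proof -
  from DERIV_continuous_on[OF assms(3)] DERIV_continuous_on[OF assms(4)]
  have int: "(\<lambda>s. h' s * sin (\<theta> s)) integrable_on {0..T}"
      "(\<lambda>s. g s * h s * (sin (\<theta> s) * cos (\<theta> s))) integrable_on {0..T}"
    using assms(6,7) by (auto intro!: integrable_continuous_real continuous_intros)
  define I1 where "I1 = integral {0..T} (\<lambda>s. h' s * sin (\<theta> s))"
  define I3 where "I3 = integral {0..T} (\<lambda>s. g s * h s * (sin (\<theta> s) * cos (\<theta> s)))"
  have "norm I1 \<le> integral {0..T} \<rho>"
    unfolding I1_def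
  proof (rule integral_norm_bound_integral[OF int(1) \<open>\<rho> integrable_on {0..T}\<close>])
    show "norm (h' s * sin (\<theta> s)) \<le> \<rho> s" if "s \<in> {0..T}" for s
      using h'_le[OF that] abs_sin_le_one[of "\<theta> s"] by (simp add: abs_mult_le_of_abs_le_one)
  qed
  then have I1: "\<bar>I1\<bar> \<le> e"
    using \<open>integral {0..T} \<rho> \<le> e\<close> by simp
  have "norm I3 \<le> integral {0..T} \<rho>"
    unfolding I3_def
  proof (rule integral_norm_bound_integral[OF int(2) \<open>\<rho> integrable_on {0..T}\<close>])
    show "norm (g s * h s * (sin (\<theta> s) * cos (\<theta> s))) \<le> \<rho> s" if "s \<in> {0..T}" for s
    proof -
      have "\<bar>sin (\<theta> s) * cos (\<theta> s)\<bar> \<le> 1"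
        unfolding abs_mult by (rule mult_le_one) auto
      then show ?thesis
        using gh_le[OF that] by (simp add: abs_mult_le_of_abs_le_one)
    qed
  qed
  then have I3: "\<bar>\<sigma> * I3\<bar> \<le> e"
    using \<open>integral {0..T} \<rho> \<le> e\<close> \<open>\<bar>\<sigma>\<bar> \<le> 1\<close> abs_mult_le_of_abs_le_one[of I3 e \<sigma>]
    by (simp add: mult.commute)
  have boundary: "\<bar>h t * sin (\<theta> t)\<bar> \<le> H" if "t \<in> {0..T}" for t
    using h_le[OF that] abs_sin_le_one[of "\<theta> t"] by (simp add: abs_mult_le_of_abs_le_one)
  show ?thesis
    using integral_cos_phase_by_parts[OF assms(1,3-7)] boundary[of 0] boundary[of T] I1 I3 \<open>0 \<le> T\<close>
    unfolding I1_def[symmetric] I3_def[symmetric] by (simp add: abs_le_iff)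
qed

lemma relativistic_ratios:
  fixes c m Q U :: real
  assumes "0 < c" "0 < m" "m * c\<^sup>2 \<le> Q" "c * U \<le> Q" "0 \<le> U"
  shows "0 < Q" "c\<^sup>2 / Q \<le> 1 / m" "c * U / Q \<le> 1" "0 \<le> c * U / Q"
proof -
  have "0 < m * c\<^sup>2"
    using assms(1,2) by simp
  then show "0 < Q"
    using assms(3) by linarith
  then show "c\<^sup>2 / Q \<le> 1 / m" "c * U / Q \<le> 1" "0 \<le> c * U / Q"
    using assms by (simp_all add: field_simps)
qed

lemma relativistic_amplitude_le:
  fixes c m Q U V p :: real
  assumes "0 < c" "0 < m" "m * c\<^sup>2 \<le> Q" "c * U \<le> Q" "0 \<le> U" "0 \<le> V" "\<bar>p\<bar> \<le> U * V"
  shows "\<bar>c\<^sup>2 * p / (2 * Q ^ 3)\<bar> \<le> c * V / (2 * (m * c\<^sup>2)\<^sup>2)"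
proof -
  note r = relativistic_ratios[OF assms(1-5)]
  have "\<bar>c\<^sup>2 * p / (2 * Q ^ 3)\<bar> = c\<^sup>2 * \<bar>p\<bar> / (2 * Q ^ 3)"
    using r(1) by (simp add: abs_mult)
  also have "\<dots> \<le> c\<^sup>2 * (U * V) / (2 * Q ^ 3)"
    using assms(7) r(1) by (intro divide_right_mono mult_left_mono) auto
  also have "\<dots> = (c * U / Q) * (c * V / (2 * Q\<^sup>2))"
    using r(1) by (simp add: field_simps power2_eq_square power3_eq_cube)
  also have "\<dots> \<le> c * V / (2 * Q\<^sup>2)"
    using r(3,4) assms(1,6) by (intro mult_left_le_one_le) auto
  also have "\<dots> \<le> c * V / (2 * (m * c\<^sup>2)\<^sup>2)"
  proof -
    have "(m * c\<^sup>2)\<^sup>2 \<le> Q\<^sup>2"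
      using assms(1-3) by (intro power_mono) auto
    then show ?thesis
      using assms(1,2,6) r(1) by (intro divide_left_mono) auto
  qed
  finally show ?thesis .
qed

lemma relativistic_amplitude_deriv_le:
  fixes c m Q U V W p p' :: real
  assumes "0 < c" "0 < m" "m * c\<^sup>2 \<le> Q" "c * U \<le> Q" "0 \<le> U" "0 \<le> W"
    and "\<bar>p\<bar> \<le> U * V" "\<bar>p'\<bar> \<le> V\<^sup>2 + U * W"
  shows "\<bar>c\<^sup>2 / 2 * p' / Q ^ 3 - 3 / 2 * c ^ 4 * p\<^sup>2 / Q ^ 5\<bar> \<le> (2 / m + c / 2) * ((V\<^sup>2 + W) / Q\<^sup>2)"
proof -
  note r = relativistic_ratios[OF assms(1-5)]
  define v w where "v = V\<^sup>2 / Q\<^sup>2" and "w = W / Q\<^sup>2"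
  have "0 \<le> v" "0 \<le> w" using assms(6) by (simp_all add: v_def w_def)
  have "\<bar>c\<^sup>2 / 2 * p' / Q ^ 3\<bar> \<le> c\<^sup>2 / 2 * (V\<^sup>2 + U * W) / Q ^ 3"
    using assms(8) r(1) by (simp add: abs_mult divide_right_mono mult_left_mono)
  also have "\<dots> = (c\<^sup>2 / Q) * v / 2 + (c * U / Q) * (c * w) / 2"
    using r(1) by (simp add: v_def w_def field_simps power2_eq_square power3_eq_cube)
  also have "\<dots> \<le> (1 / m) * v / 2 + 1 * (c * w) / 2"
    using r \<open>0 \<le> v\<close> \<open>0 \<le> w\<close> assms(1,2)
    by (intro add_mono divide_right_mono mult_right_mono) auto
  finally have A: "\<bar>c\<^sup>2 / 2 * p' / Q ^ 3\<bar> \<le> v / (2 * m) + c / 2 * w" by simp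
  have "p\<^sup>2 \<le> (U * V)\<^sup>2"
    using assms(7) by (metis abs_ge_zero order_trans power2_abs power_mono)
  then have "3 / 2 * c ^ 4 * p\<^sup>2 / Q ^ 5 \<le> 3 / 2 * c ^ 4 * (U * V)\<^sup>2 / Q ^ 5"
    using r(1) by (intro divide_right_mono mult_left_mono) auto
  also have "\<dots> = 3 / 2 * (c * U / Q)\<^sup>2 * (c\<^sup>2 / Q) * v"
    using r(1) by (simp add: v_def field_simps power2_eq_square eval_nat_numeral)
  also have "\<dots> \<le> 3 / 2 * 1 * (1 / m) * v"
    using r \<open>0 \<le> v\<close> assms(2) by (intro mult_mono power_le_one) auto
  finally have B: "\<bar>3 / 2 * c ^ 4 * p\<^sup>2 / Q ^ 5\<bar> \<le> 3 * v / (2 * m)"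
    using r(1) by simp
  have "\<bar>c\<^sup>2 / 2 * p' / Q ^ 3 - 3 / 2 * c ^ 4 * p\<^sup>2 / Q ^ 5\<bar> \<le> v / (2 * m) + 3 * v / (2 * m) + c / 2 * w"
    using abs_triangle_ineq4[of "c\<^sup>2 / 2 * p' / Q ^ 3" "3 / 2 * c ^ 4 * p\<^sup>2 / Q ^ 5"] A B by linarith
  also have "\<dots> \<le> (2 / m + c / 2) * (v + w)"
    using assms(1,2) \<open>0 \<le> v\<close> \<open>0 \<le> w\<close> by (simp add: field_simps)
  also have "v + w = (V\<^sup>2 + W) / Q\<^sup>2"
    by (simp add: v_def w_def add_divide_distrib)
  finally show ?thesis .
qed

lemma relativistic_rate_amplitude_le:
  fixes c m Q U V W p :: real
  assumes "0 < c" "0 < m" "m * c\<^sup>2 \<le> Q" "c * U \<le> Q" "0 \<le> U" "0 \<le> W" "\<bar>p\<bar> \<le> U * V"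
  shows "\<bar>c\<^sup>2 * p / Q\<^sup>2 * (c\<^sup>2 * p / (2 * Q ^ 3))\<bar> \<le> (2 / m + c / 2) * ((V\<^sup>2 + W) / Q\<^sup>2)"
proof -
  note r = relativistic_ratios[OF assms(1-5)]
  have "p\<^sup>2 \<le> (U * V)\<^sup>2"
    using assms(7) by (metis abs_ge_zero order_trans power2_abs power_mono)
  have "\<bar>c\<^sup>2 * p / Q\<^sup>2 * (c\<^sup>2 * p / (2 * Q ^ 3))\<bar> = c ^ 4 * p\<^sup>2 / (2 * Q ^ 5)"
    using r(1) by (simp add: field_simps power2_eq_square eval_nat_numeral abs_mult)
  also have "\<dots> \<le> c ^ 4 * (U * V)\<^sup>2 / (2 * Q ^ 5)"
    using \<open>p\<^sup>2 \<le> (U * V)\<^sup>2\<close> r(1) by (intro divide_right_mono mult_left_mono) auto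
  also have "\<dots> = (c * U / Q)\<^sup>2 * (c\<^sup>2 / Q) * (V\<^sup>2 / Q\<^sup>2) / 2"
    using r(1) by (simp add: field_simps power2_eq_square eval_nat_numeral)
  also have "\<dots> \<le> 1 * (1 / m) * (V\<^sup>2 / Q\<^sup>2) / 2"
    using r assms(2) by (intro divide_right_mono mult_mono power_le_one) auto
  also have "\<dots> \<le> (2 / m + c / 2) * ((V\<^sup>2 + W) / Q\<^sup>2)"
    using assms(1,2,6) r(1) by (simp add: field_simps)
  finally show ?thesis .
qed

lemma exp_neg_half_log_ratio:
  fixes x y z :: real
  assumes "0 < x" "0 < y"
  shows "exp (- ((ln y - ln x) / 2 + z)) = sqrt x / sqrt y * exp (- z)"
proof -
  have sqrt_exp: "sqrt u = exp (ln u / 2)" if "0 < u" for u :: real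
    using that by (simp add: powr_half_sqrt[symmetric] powr_def)
  have "- ((ln y - ln x) / 2 + z) = ln x / 2 - ln y / 2 + - z"
    by (simp add: field_simps)
  then have "exp (- ((ln y - ln x) / 2 + z)) = exp (ln x / 2 - ln y / 2 + - z)"
    by (rule arg_cong)
  also have "\<dots> = exp (ln x / 2) / exp (ln y / 2) * exp (- z)"
    by (simp only: exp_add exp_diff)
  finally show ?thesis
    using assms by (simp add: sqrt_exp)
qed

section \<open>The phase integrals for a smooth drift\<close>

locale smooth_drift =
  fixes c m :: real and b b' b'' :: "real \<Rightarrow> real ^ 'n"
  assumes c_pos: "0 < c" and m_pos: "0 < m"
    and b_deriv: "\<And>s. (b has_vector_derivative b' s) (at s)"
    and b'_deriv: "\<And>s. (b' has_vector_derivative b'' s) (at s)"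
    and b''_cont: "continuous_on UNIV b''"
begin

abbreviation Q :: "real ^ 'n \<Rightarrow> real \<Rightarrow> real" where
  "Q \<xi> s \<equiv> Qf c m b s \<xi>"

definition G :: "real ^ 'n \<Rightarrow> real \<Rightarrow> real" where
  "G \<xi> s = c\<^sup>2 * ((\<xi> + b s) \<bullet> b' s) / (Q \<xi> s)\<^sup>2"

definition h :: "real ^ 'n \<Rightarrow> real \<Rightarrow> real" where
  "h \<xi> s = c\<^sup>2 * ((\<xi> + b s) \<bullet> b' s) / (2 * Q \<xi> s ^ 3)"

definition dh :: "real ^ 'n \<Rightarrow> real \<Rightarrow> real" where
  "dh \<xi> s = c\<^sup>2 / 2 * ((norm (b' s))\<^sup>2 + (\<xi> + b s) \<bullet> b'' s) / Q \<xi> s ^ 3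
     - 3 / 2 * c ^ 4 * ((\<xi> + b s) \<bullet> b' s)\<^sup>2 / Q \<xi> s ^ 5"

definition \<rho> :: "real ^ 'n \<Rightarrow> real \<Rightarrow> real" where
  "\<rho> \<xi> s = ((norm (b' s))\<^sup>2 + norm (b'' s)) / (c\<^sup>2 * (norm (\<xi> + b s))\<^sup>2 + (m * c\<^sup>2)\<^sup>2)"

lemma Q_pos: "0 < Q \<xi> s"
  using c_pos m_pos by (simp add: Qf_pos)

lemma Q_neq_0 [simp]: "Q \<xi> s \<noteq> 0"
  using Q_pos by (rule less_imp_neq[symmetric])

lemma Q_sq: "(Q \<xi> s)\<^sup>2 = c\<^sup>2 * (norm (\<xi> + b s))\<^sup>2 + (m * c\<^sup>2)\<^sup>2"
  by (simp add: Qf_def)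

lemma Q_ge: "m * c\<^sup>2 \<le> Q \<xi> s"
  using m_pos by (simp add: Qf_def real_le_rsqrt)

lemma Q_ge_norm: "c * norm (\<xi> + b s) \<le> Q \<xi> s"
  using c_pos by (simp add: Qf_def real_le_rsqrt power_mult_distrib)

lemma \<rho>_eq: "\<rho> \<xi> s = ((norm (b' s))\<^sup>2 + norm (b'' s)) / (Q \<xi> s)\<^sup>2"
  by (simp add: \<rho>_def Q_sq)

lemma Q_has_real_derivative: "(Q \<xi> has_real_derivative G \<xi> s * Q \<xi> s) (at s)"
  using Qf_has_real_derivative[OF b_deriv, where \<xi>=\<xi>] c_pos m_pos Q_pos
  by (simp add: G_def power2_eq_square)

lemma Qd_div_Q: "Qd c m b s \<xi> / Q \<xi> s = G \<xi> s"
  using DERIV_imp_deriv[OF Q_has_real_derivative] Q_pos by (simp add: Qd_def)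

lemma G_has_integral: "0 \<le> t \<Longrightarrow> (G \<xi> has_integral ln (Q \<xi> t) - ln (Q \<xi> 0)) {0..t}"
proof (rule fundamental_theorem_of_calculus)
  fix s
  have "((\<lambda>s. ln (Q \<xi> s)) has_real_derivative 1 / Q \<xi> s * (G \<xi> s * Q \<xi> s)) (at s)"
    by (rule DERIV_chain2[OF DERIV_ln_divide[OF Q_pos] Q_has_real_derivative])
  then show "((\<lambda>s. ln (Q \<xi> s)) has_vector_derivative G \<xi> s) (at s within {0..t})"
    by (simp add: has_real_derivative_iff_has_vector_derivative[symmetric] has_field_derivative_at_within)
qed

lemma h_mult_Q: "h \<xi> s * (2 * Q \<xi> s) = G \<xi> s"
  using Q_pos by (simp add: h_def G_def power2_eq_square power3_eq_cube)

lemma h_has_real_derivative: "(h \<xi> has_real_derivative dh \<xi> s) (at s)"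
proof -
  have b: "((\<lambda>s. \<xi> + b s) has_vector_derivative b' s) (at s)"
    using b_deriv by (auto intro!: derivative_eq_intros)
  show ?thesis
    unfolding h_def[abs_def]
    by (rule derivative_eq_intros has_real_derivative_inner[OF b b'_deriv] Q_has_real_derivative refl | simp)+
      (simp add: dh_def G_def dot_square_norm field_simps eval_nat_numeral)
qed

lemma continuous_on_G: "continuous_on UNIV (G \<xi>)"
  and continuous_on_dh: "continuous_on UNIV (dh \<xi>)"
  and continuous_on_\<rho>: "continuous_on UNIV (\<rho> \<xi>)"
proof -
  have "continuous_on UNIV b" "continuous_on UNIV b'" "continuous_on UNIV (Q \<xi>)"
    using b_deriv b'_deriv Q_has_real_derivative
    by (auto intro!: continuous_at_imp_continuous_on has_vector_derivative_continuous DERIV_isCont)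
  then show "continuous_on UNIV (G \<xi>)" "continuous_on UNIV (dh \<xi>)" "continuous_on UNIV (\<rho> \<xi>)"
    unfolding G_def[abs_def] dh_def[abs_def] \<rho>_eq[abs_def]
    by (auto intro!: continuous_intros b''_cont)
qed

lemma \<rho>_eq_vector_derivative:
  "\<rho> \<xi> = (\<lambda>s. ((norm (vector_derivative b (at s)))\<^sup>2
      + norm (vector_derivative (\<lambda>r. vector_derivative b (at r)) (at s)))
    / (c\<^sup>2 * (norm (\<xi> + b s))\<^sup>2 + (m * c\<^sup>2)\<^sup>2))"
proof -
  have "(\<lambda>r. vector_derivative b (at r)) = b'"
    using b_deriv by (auto intro: vector_derivative_at)
  then show ?thesis
    by (simp add: \<rho>_def[abs_def] vector_derivative_at[OF b_deriv] vector_derivative_at[OF b'_deriv])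
qed

lemma h_le:
  assumes "norm (b' s) \<le> V"
  shows "\<bar>h \<xi> s\<bar> \<le> c * V / (2 * (m * c\<^sup>2)\<^sup>2)"
proof -
  have "\<bar>(\<xi> + b s) \<bullet> b' s\<bar> \<le> norm (\<xi> + b s) * V"
    by (rule order_trans[OF Cauchy_Schwarz_ineq2 mult_left_mono[OF assms norm_ge_zero]])
  then show ?thesis
    unfolding h_def
    by (rule relativistic_amplitude_le[OF c_pos m_pos Q_ge Q_ge_norm norm_ge_zero order_trans[OF norm_ge_zero assms]])
qed

lemma dh_le: "\<bar>dh \<xi> s\<bar> \<le> (2 / m + c / 2) * \<rho> \<xi> s"
proof -
  have "\<bar>(norm (b' s))\<^sup>2 + (\<xi> + b s) \<bullet> b'' s\<bar> \<le> (norm (b' s))\<^sup>2 + norm (\<xi> + b s) * norm (b'' s)"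
    using abs_triangle_ineq[of "(norm (b' s))\<^sup>2" "(\<xi> + b s) \<bullet> b'' s"]
      Cauchy_Schwarz_ineq2[of "\<xi> + b s" "b'' s"] by simp
  then show ?thesis
    unfolding dh_def \<rho>_eq
    by (rule relativistic_amplitude_deriv_le[OF c_pos m_pos Q_ge Q_ge_norm norm_ge_zero norm_ge_zero Cauchy_Schwarz_ineq2])
qed

lemma G_h_le: "\<bar>G \<xi> s * h \<xi> s\<bar> \<le> (2 / m + c / 2) * \<rho> \<xi> s"
  unfolding G_def h_def \<rho>_eq
  by (rule relativistic_rate_amplitude_le[OF c_pos m_pos Q_ge Q_ge_norm norm_ge_zero norm_ge_zero Cauchy_Schwarz_ineq2])

lemma integral_G_cos_double_phase_le:
  fixes \<theta> :: "real \<Rightarrow> real"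
  assumes "\<bar>\<kappa>\<bar> \<le> 1" "0 \<le> T"
    and sol: "\<And>t. t \<in> {0..T} \<Longrightarrow>
      ((\<lambda>s. Q \<xi> s + \<kappa> * G \<xi> s * sin (\<theta> s) * cos (\<theta> s)) has_integral \<theta> t) {0..t}"
    and "\<And>s. norm (b' s) \<le> V" "integral {0..T} (\<rho> \<xi>) \<le> e"
  shows "\<bar>integral {0..T} (\<lambda>s. G \<xi> s * cos (2 * \<theta> s))\<bar>
    \<le> 2 * (c * V / (2 * (m * c\<^sup>2)\<^sup>2)) + 2 * ((2 / m + c / 2) * e)"
proof (rule integral_cos_phase_bound[where \<omega>="\<lambda>s. 2 * Q \<xi> s" and g="G \<xi>" and h="h \<xi>" and h'="dh \<xi>"
      and \<rho>="\<lambda>s. (2 / m + c / 2) * \<rho> \<xi> s" and \<sigma>=\<kappa>])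
  have "continuous_on {0..T} (Q \<xi>)"
    using Q_has_real_derivative by (auto intro!: continuous_at_imp_continuous_on DERIV_isCont)
  then show "((\<lambda>s. 2 * \<theta> s) has_real_derivative 2 * Q \<xi> s + \<kappa> * G \<xi> s * sin (2 * \<theta> s)) (at s within {0..T})"
    if "s \<in> {0..T}" for s
    using continuous_on_G that by (intro double_phase_has_real_derivative[OF sol]) (auto intro: continuous_on_subset)
  show "integral {0..T} (\<lambda>s. (2 / m + c / 2) * \<rho> \<xi> s) \<le> (2 / m + c / 2) * e"
    using assms(5) c_pos m_pos by (simp add: mult_left_mono)
  show "(\<lambda>s. (2 / m + c / 2) * \<rho> \<xi> s) integrable_on {0..T}"
    using continuous_on_\<rho> by (intro integrable_continuous_real continuous_intros) (rule continuous_on_subset, auto)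
  show "continuous_on {0..T} (G \<xi>)" "continuous_on {0..T} (dh \<xi>)"
    using continuous_on_G continuous_on_dh by (auto intro: continuous_on_subset)
qed (use assms h_has_real_derivative h_mult_Q h_le dh_le G_h_le in \<open>auto intro: has_field_derivative_at_within\<close>)

lemma integral_Qd_sin_sq:
  fixes \<theta> :: "real \<Rightarrow> real"
  assumes "0 \<le> t" "continuous_on {0..t} \<theta>"
  shows "integral {0..t} (\<lambda>s. Qd c m b s \<xi> / Q \<xi> s * (sin (\<theta> s))\<^sup>2)
    = (ln (Q \<xi> t) - ln (Q \<xi> 0)) / 2 - integral {0..t} (\<lambda>s. G \<xi> s * cos (2 * \<theta> s)) / 2"
proof -
  have "(\<lambda>s. G \<xi> s * cos (2 * \<theta> s)) integrable_on {0..t}"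
    using assms(2) continuous_on_G
    by (auto intro!: integrable_continuous_real continuous_intros intro: continuous_on_subset)
  then have "((\<lambda>s. G \<xi> s / 2 - G \<xi> s * cos (2 * \<theta> s) / 2) has_integral
      (ln (Q \<xi> t) - ln (Q \<xi> 0)) / 2 - integral {0..t} (\<lambda>s. G \<xi> s * cos (2 * \<theta> s)) / 2) {0..t}"
    using G_has_integral[OF assms(1)] by (intro has_integral_diff has_integral_divide) auto
  moreover have "(\<lambda>s. Qd c m b s \<xi> / Q \<xi> s * (sin (\<theta> s))\<^sup>2) = (\<lambda>s. G \<xi> s / 2 - G \<xi> s * cos (2 * \<theta> s) / 2)"
    unfolding Qd_div_Q cos_double_sin by (simp add: field_simps)
  ultimately show ?thesis
    by (simp add: integral_unique)
qed

lemma integral_Qd_cos_sq: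
  fixes \<theta> :: "real \<Rightarrow> real"
  assumes "0 \<le> t" "continuous_on {0..t} \<theta>"
  shows "integral {0..t} (\<lambda>s. Qd c m b s \<xi> / Q \<xi> s * (cos (\<theta> s))\<^sup>2)
    = (ln (Q \<xi> t) - ln (Q \<xi> 0)) / 2 + integral {0..t} (\<lambda>s. G \<xi> s * cos (2 * \<theta> s)) / 2"
proof -
  have "(\<lambda>s. G \<xi> s * cos (2 * \<theta> s)) integrable_on {0..t}"
    using assms(2) continuous_on_G
    by (auto intro!: integrable_continuous_real continuous_intros intro: continuous_on_subset)
  then have "((\<lambda>s. G \<xi> s / 2 + G \<xi> s * cos (2 * \<theta> s) / 2) has_integral
      (ln (Q \<xi> t) - ln (Q \<xi> 0)) / 2 + integral {0..t} (\<lambda>s. G \<xi> s * cos (2 * \<theta> s)) / 2) {0..t}"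
    using G_has_integral[OF assms(1)] by (intro has_integral_add has_integral_divide) auto
  moreover have "(\<lambda>s. Qd c m b s \<xi> / Q \<xi> s * (cos (\<theta> s))\<^sup>2) = (\<lambda>s. G \<xi> s / 2 + G \<xi> s * cos (2 * \<theta> s) / 2)"
    unfolding Qd_div_Q cos_double_cos by (simp add: field_simps)
  ultimately show ?thesis
    by (simp add: integral_unique)
qed

lemma sin_amplitude_bounds:
  fixes B :: "real \<Rightarrow> real"
  assumes "0 \<le> t" "\<And>s. norm (b' s) \<le> V" "integral {0..t} (\<rho> \<xi>) \<le> e"
    and "c * V / (2 * (m * c\<^sup>2)\<^sup>2) + (2 / m + c / 2) * e \<le> C"
    and sol: "\<And>t. t \<ge> 0 \<Longrightarrow>
      ((\<lambda>s. Q \<xi> s - Qd c m b s \<xi> / Q \<xi> s * sin (B s) * cos (B s)) has_integral B t) {0..t}"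
  defines "A \<equiv> exp (- integral {0..t} (\<lambda>s. Qd c m b s \<xi> / Q \<xi> s * (sin (B s))\<^sup>2))"
  shows "sqrt (Q \<xi> 0) / sqrt (Q \<xi> t) * exp (- C) \<le> \<bar>A\<bar> \<and> \<bar>A\<bar> \<le> sqrt (Q \<xi> 0) / sqrt (Q \<xi> t) * exp C"
proof -
  have sol': "((\<lambda>s. Q \<xi> s + (- 1) * G \<xi> s * sin (B s) * cos (B s)) has_integral B \<tau>) {0..\<tau>}"
    if "\<tau> \<in> {0..t}" for \<tau>
    using sol[of \<tau>] that by (simp add: Qd_div_Q)
  define I where "I = integral {0..t} (\<lambda>s. G \<xi> s * cos (2 * B s))"
  have "\<bar>I\<bar> \<le> 2 * C"
    using integral_G_cos_double_phase_le[OF _ \<open>0 \<le> t\<close> sol' assms(2,3)] assms(4) unfolding I_def by linarith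
  then have exp_le: "exp (- C) \<le> exp (I / 2)" "exp (I / 2) \<le> exp C"
    by auto
  have r: "0 < sqrt (Q \<xi> 0) / sqrt (Q \<xi> t)"
    using Q_pos[of 0 \<xi>] Q_pos[of t \<xi>] by simp
  have A_eq: "A = sqrt (Q \<xi> 0) / sqrt (Q \<xi> t) * exp (I / 2)"
    using integral_Qd_sin_sq[OF \<open>0 \<le> t\<close> continuous_on_indefinite_integral_eq[OF sol']]
      exp_neg_half_log_ratio[OF Q_pos[of 0 \<xi>] Q_pos[of t \<xi>], of "- I / 2"]
    by (simp add: A_def I_def)
  have "\<bar>A\<bar> = sqrt (Q \<xi> 0) / sqrt (Q \<xi> t) * exp (I / 2)"
    unfolding A_eq using r by (intro abs_of_pos mult_pos_pos exp_gt_zero)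
  with exp_le r show ?thesis
    by (simp only:) (intro conjI mult_left_mono; simp)
qed

lemma cos_amplitude_bounds:
  fixes D :: "real \<Rightarrow> real"
  assumes "0 \<le> t" "\<And>s. norm (b' s) \<le> V" "integral {0..t} (\<rho> \<xi>) \<le> e"
    and "c * V / (2 * (m * c\<^sup>2)\<^sup>2) + (2 / m + c / 2) * e \<le> C"
    and sol: "\<And>t. t \<ge> 0 \<Longrightarrow>
      ((\<lambda>s. Q \<xi> s + Qd c m b s \<xi> / Q \<xi> s * sin (D s) * cos (D s)) has_integral D t) {0..t}"
  defines "A \<equiv> exp (- integral {0..t} (\<lambda>s. Qd c m b s \<xi> / Q \<xi> s * (cos (D s))\<^sup>2)) / Q \<xi> 0"
  shows "exp (- C) / (sqrt (Q \<xi> t) * sqrt (Q \<xi> 0)) \<le> \<bar>A\<bar> \<and> \<bar>A\<bar> \<le> exp C / (sqrt (Q \<xi> t) * sqrt (Q \<xi> 0))"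
proof -
  have sol': "((\<lambda>s. Q \<xi> s + 1 * G \<xi> s * sin (D s) * cos (D s)) has_integral D \<tau>) {0..\<tau>}"
    if "\<tau> \<in> {0..t}" for \<tau>
    using sol[of \<tau>] that by (simp add: Qd_div_Q)
  define I where "I = integral {0..t} (\<lambda>s. G \<xi> s * cos (2 * D s))"
  have "\<bar>I\<bar> \<le> 2 * C"
    using integral_G_cos_double_phase_le[OF _ \<open>0 \<le> t\<close> sol' assms(2,3)] assms(4) unfolding I_def by linarith
  then have exp_le: "exp (- C) \<le> exp (- I / 2)" "exp (- I / 2) \<le> exp C"
    by auto
  have A_eq: "A = exp (- I / 2) / (sqrt (Q \<xi> t) * sqrt (Q \<xi> 0))"
  proof -
    have "A = sqrt (Q \<xi> 0) / sqrt (Q \<xi> t) * exp (- (I / 2)) / Q \<xi> 0"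
      using integral_Qd_cos_sq[OF \<open>0 \<le> t\<close> continuous_on_indefinite_integral_eq[OF sol']]
        exp_neg_half_log_ratio[OF Q_pos[of 0 \<xi>] Q_pos[of t \<xi>], of "I / 2"]
      by (simp add: A_def I_def)
    also have "\<dots> = exp (- I / 2) / (sqrt (Q \<xi> t) * sqrt (Q \<xi> 0))"
      using Q_pos[of 0 \<xi>] real_sqrt_mult_self[of "Q \<xi> 0"] by (simp add: field_simps)
    finally show ?thesis .
  qed
  have r: "0 < sqrt (Q \<xi> t) * sqrt (Q \<xi> 0)"
    using Q_pos[of 0 \<xi>] Q_pos[of t \<xi>] by simp
  have "\<bar>A\<bar> = exp (- I / 2) / (sqrt (Q \<xi> t) * sqrt (Q \<xi> 0))"
    unfolding A_eq using r by (intro abs_of_pos divide_pos_pos exp_gt_zero)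
  with exp_le r show ?thesis
    by (simp add: divide_right_mono)
qed

end

theorem proposition3p3:
  fixes c m q E00 E01 :: real
    and E E' :: "real \<Rightarrow> real ^ 'n"
    and B D :: "real \<Rightarrow> real ^ 'n \<Rightarrow> real"
  assumes c_pos: "c > 0" and m_pos: "m > 0" and q_nz: "q \<noteq> 0"
    and E_deriv: "\<And>t. (E has_vector_derivative E' t) (at t)"
    and E'_cont: "continuous_on UNIV E'"
    and E_sup0: "\<exists>M < E00. \<forall>t. (\<Sum>j\<in>UNIV. \<bar>E t $ j\<bar>) \<le> M"
    and E_sup1: "\<exists>M < E01. \<forall>t. (\<Sum>j\<in>UNIV. \<bar>E' t $ j\<bar>) \<le> M"
    and E1_lim: "filterlim (\<lambda>t. norm (drift q E t)) at_top at_top"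
    and E1_ints: "\<exists>e0 e1. \<forall>a :: real ^ 'n.
        (\<integral>\<^sup>+ s\<in>{s. 0 \<le> s \<and> norm (a + drift q E s) \<le> 2 * E00 / (m * c\<^sup>2)}.
            ennreal (norm (vector_derivative (drift q E) (at s))) \<partial>lborel) \<le> ennreal e0
        \<and> (\<forall>t\<ge>0. integral {0..t} (\<lambda>s.
              ((norm (vector_derivative (drift q E) (at s)))\<^sup>2
               + norm (vector_derivative (\<lambda>r. vector_derivative (drift q E) (at r)) (at s)))
              / (c\<^sup>2 * (norm (a + drift q E s))\<^sup>2 + (m * c\<^sup>2)\<^sup>2)) \<le> e1)"
    and B_sol: "\<And>t \<xi>. t \<ge> 0 \<Longrightarrow> ((\<lambda>s. Qf c m (drift q E) s \<xi>
          - Qd c m (drift q E) s \<xi> / Qf c m (drift q E) s \<xi> * sin (B s \<xi>) * cos (B s \<xi>))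
          has_integral B t \<xi>) {0..t}"
    and D_sol: "\<And>t \<xi>. t \<ge> 0 \<Longrightarrow> ((\<lambda>s. Qf c m (drift q E) s \<xi>
          + Qd c m (drift q E) s \<xi> / Qf c m (drift q E) s \<xi> * sin (D s \<xi>) * cos (D s \<xi>))
          has_integral D t \<xi>) {0..t}"
  shows "\<exists>C0 C1 :: real. 0 < C0 \<and> 0 < C1 \<and>
    (\<forall>t \<ge> 0. \<forall>\<xi> :: real ^ 'n.
      (let Q = (\<lambda>s. Qf c m (drift q E) s \<xi>);
           Q' = (\<lambda>s. Qd c m (drift q E) s \<xi>);
           A = exp (- integral {0..t} (\<lambda>s. Q' s / Q s * (sin (B s \<xi>))\<^sup>2));
           C = exp (- integral {0..t} (\<lambda>s. Q' s / Q s * (cos (D s \<xi>))\<^sup>2)) / Q 0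
       in sqrt (Q 0) / sqrt (Q t) * exp (- C0) \<le> \<bar>A\<bar>
        \<and> \<bar>A\<bar> \<le> sqrt (Q 0) / sqrt (Q t) * exp C0
        \<and> exp (- C1) / (sqrt (Q t) * sqrt (Q 0)) \<le> \<bar>C\<bar>
        \<and> \<bar>C\<bar> \<le> exp C1 / (sqrt (Q t) * sqrt (Q 0))))"
proof -
  have E_cont: "continuous_on UNIV E"
    using E_deriv by (intro continuous_at_imp_continuous_on ballI has_vector_derivative_continuous) blast
  interpret smooth_drift c m "drift q E" "\<lambda>s. q *\<^sub>R E s" "\<lambda>s. q *\<^sub>R E' s"
    using c_pos m_pos drift_has_vector_derivative[OF E_cont] E_deriv E'_cont
    by unfold_locales (auto intro!: derivative_eq_intros continuous_intros)
  obtain M0 where "\<And>t. (\<Sum>j\<in>UNIV. \<bar>E t $ j\<bar>) \<le> M0"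
    using E_sup0 by blast
  then have E_le: "\<And>s. norm (q *\<^sub>R E s) \<le> \<bar>q\<bar> * M0"
    by (simp add: mult_left_mono order_trans[OF norm_le_l1_cart])
  obtain e1 where \<rho>_le: "\<And>\<xi> t. 0 \<le> t \<Longrightarrow> integral {0..t} (\<rho> \<xi>) \<le> e1"
    using E1_ints unfolding \<rho>_eq_vector_derivative by blast
  define C where "C = \<bar>c * (\<bar>q\<bar> * M0) / (2 * (m * c\<^sup>2)\<^sup>2) + (2 / m + c / 2) * e1\<bar> + 1"
  have C_ge: "c * (\<bar>q\<bar> * M0) / (2 * (m * c\<^sup>2)\<^sup>2) + (2 / m + c / 2) * e1 \<le> C" and "0 < C"
    by (simp_all add: C_def add_nonneg_pos)
  note bounds = sin_amplitude_bounds[where V="\<bar>q\<bar> * M0" and e=e1 and C=C, OF _ E_le \<rho>_le C_ge B_sol]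
    cos_amplitude_bounds[where V="\<bar>q\<bar> * M0" and e=e1 and C=C, OF _ E_le \<rho>_le C_ge D_sol]
  show ?thesis
    unfolding Let_def
    by (intro exI[of _ C] conjI allI impI \<open>0 < C\<close> bounds[THEN conjunct1] bounds[THEN conjunct2])
qed

end
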